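(* Let $\Phi$ be an irreducible root system of classical type ($A_r$, $B_r$, $C_r$ or $D_r$) with base $\{\alpha_1,\dots,\alpha_r\}$. For every $1\le i\le r$, the root subsystem $\Phi\cap\mathbb Z\{\alpha_k:k\neq i\}$ generated by the simple roots other than $\alpha_i$ is a good root subsystem of $\Phi$; conversely, every good root subsystem of $\Phi$ is $W$-conjugate to one of these.
   Context: $W$ is the Weyl group of $\Phi$, and $\mathbb Z\{\cdot\}$ denotes the integral span. A root subsystem $\Psi\subseteq\Phi$ is closed if $\lambda,\mu\in\Psi$, $\lambda+\mu\in\Phi$ imply $\lambda+\mu\in\Psi$; $\operatorname{rk}\Psi=\dim\operatorname{Span}\Psi$. A good root subsystem of $\Phi$ (rank $r$) is a closed root subsystem of rank $r-1$ maximal under inclusion among closed root subsystems of rank $r-1$. *)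

theory Defs
  imports "HOL-Analysis.Analysis"
begin

definition rrefl :: "'a::euclidean_space \<Rightarrow> 'a \<Rightarrow> 'a" where
  "rrefl a v = v - ((2 * (v \<bullet> a)) / (a \<bullet> a)) *\<^sub>R a"

definition cartan_int :: "'a::euclidean_space \<Rightarrow> 'a \<Rightarrow> real" where
  "cartan_int u v = (2 * (u \<bullet> v)) / (v \<bullet> v)"

text \<open>A (reduced, crystallographic) root system; it spans the subspace \<open>span \<Phi>\<close>.\<close>
definition root_system :: "'a::euclidean_space set \<Rightarrow> bool" where
  "root_system \<Phi> \<longleftrightarrow> finite \<Phi> \<and> 0 \<notin> \<Phi>
     \<and> (\<forall>a\<in>\<Phi>. \<forall>b\<in>\<Phi>. rrefl a b \<in> \<Phi>)
     \<and> (\<forall>a\<in>\<Phi>. \<forall>b\<in>\<Phi>. cartan_int b a \<in> \<int>)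
     \<and> (\<forall>a\<in>\<Phi>. \<forall>c::real. c *\<^sub>R a \<in> \<Phi> \<longrightarrow> c = 1 \<or> c = -1)"

definition rank :: "'a::euclidean_space set \<Rightarrow> nat" where
  "rank S = dim (span S)"

inductive_set weyl_group :: "'a::euclidean_space set \<Rightarrow> ('a \<Rightarrow> 'a) set" for \<Phi> where
  weyl_id: "id \<in> weyl_group \<Phi>"
| weyl_step: "w \<in> weyl_group \<Phi> \<Longrightarrow> a \<in> \<Phi> \<Longrightarrow> rrefl a \<circ> w \<in> weyl_group \<Phi>"

definition int_span :: "'a::euclidean_space set \<Rightarrow> 'a set" where
  "int_span S = {\<Sum>v\<in>T. real_of_int (c v) *\<^sub>R v | T c. finite T \<and> T \<subseteq> S}"

definition is_base :: "'a::euclidean_space set \<Rightarrow> nat \<Rightarrow> (nat \<Rightarrow> 'a) \<Rightarrow> bool" where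
  "is_base \<Phi> r \<alpha> \<longleftrightarrow> (\<forall>i\<in>{1..r}. \<alpha> i \<in> \<Phi>) \<and> inj_on \<alpha> {1..r}
     \<and> independent (\<alpha> ` {1..r})
     \<and> (\<forall>b\<in>\<Phi>. \<exists>c::nat \<Rightarrow> int. b = (\<Sum>i=1..r. real_of_int (c i) *\<^sub>R \<alpha> i)
            \<and> ((\<forall>i\<in>{1..r}. c i \<ge> 0) \<or> (\<forall>i\<in>{1..r}. c i \<le> 0)))"

text \<open>Cartan matrices (entry (i,j) = \<open>2(\<alpha>_i,\<alpha>_j)/(\<alpha>_j,\<alpha>_j)\<close>), Bourbaki numbering.\<close>
definition cartan_A :: "nat \<Rightarrow> nat \<Rightarrow> nat \<Rightarrow> real" where
  "cartan_A r i j = (if i = j then 2 else if i + 1 = j \<or> j + 1 = i then -1 else 0)"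

definition cartan_B :: "nat \<Rightarrow> nat \<Rightarrow> nat \<Rightarrow> real" where
  "cartan_B r i j = (if i = j then 2 else if i = r - 1 \<and> j = r then -2
     else if i + 1 = j \<or> j + 1 = i then -1 else 0)"

definition cartan_C :: "nat \<Rightarrow> nat \<Rightarrow> nat \<Rightarrow> real" where
  "cartan_C r i j = (if i = j then 2 else if i = r \<and> j = r - 1 then -2
     else if i + 1 = j \<or> j + 1 = i then -1 else 0)"

definition cartan_D :: "nat \<Rightarrow> nat \<Rightarrow> nat \<Rightarrow> real" where
  "cartan_D r i j = (if i = j then 2
     else if {i, j} = {r - 2, r} then -1
     else if {i, j} = {r - 1, r} then 0
     else if i + 1 = j \<or> j + 1 = i then -1 else 0)"

definition has_cartan :: "nat \<Rightarrow> (nat \<Rightarrow> 'a::euclidean_space) \<Rightarrow> (nat \<Rightarrow> nat \<Rightarrow> real) \<Rightarrow> bool" where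
  "has_cartan r \<alpha> M \<longleftrightarrow> (\<forall>i\<in>{1..r}. \<forall>j\<in>{1..r}. cartan_int (\<alpha> i) (\<alpha> j) = M i j)"

definition classical_type :: "nat \<Rightarrow> (nat \<Rightarrow> 'a::euclidean_space) \<Rightarrow> bool" where
  "classical_type r \<alpha> \<longleftrightarrow>
     (r \<ge> 1 \<and> has_cartan r \<alpha> (cartan_A r)) \<or>
     (r \<ge> 2 \<and> has_cartan r \<alpha> (cartan_B r)) \<or>
     (r \<ge> 3 \<and> has_cartan r \<alpha> (cartan_C r)) \<or>
     (r \<ge> 4 \<and> has_cartan r \<alpha> (cartan_D r))"

definition root_subsystem :: "'a::euclidean_space set \<Rightarrow> 'a set \<Rightarrow> bool" where
  "root_subsystem \<Phi> \<Psi> \<longleftrightarrow> \<Psi> \<subseteq> \<Phi> \<and> root_system \<Psi>"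

definition closed_subsystem :: "'a::euclidean_space set \<Rightarrow> 'a set \<Rightarrow> bool" where
  "closed_subsystem \<Phi> \<Psi> \<longleftrightarrow> root_subsystem \<Phi> \<Psi>
     \<and> (\<forall>l\<in>\<Psi>. \<forall>m\<in>\<Psi>. l + m \<in> \<Phi> \<longrightarrow> l + m \<in> \<Psi>)"

definition good_subsystem :: "'a::euclidean_space set \<Rightarrow> 'a set \<Rightarrow> bool" where
  "good_subsystem \<Phi> \<Psi> \<longleftrightarrow> closed_subsystem \<Phi> \<Psi> \<and> rank \<Psi> = rank \<Phi> - 1
     \<and> (\<forall>\<Psi>'. closed_subsystem \<Phi> \<Psi>' \<and> rank \<Psi>' = rank \<Phi> - 1 \<and> \<Psi> \<subseteq> \<Psi>' \<longrightarrow> \<Psi>' = \<Psi>)"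

end

theory Submission
  imports Defs "HOL-Library.FuncSet"
begin

(*
  A closed subsystem \<Psi> of corank one lies in the hyperplane section \<Phi> \<inter> n\<^sup>\<bottom>, where n \<in> span \<Phi> is a
  nonzero normal of span \<Psi>; this section is again closed of corank one, so maximality forces
  \<Psi> = \<Phi> \<inter> n\<^sup>\<bottom>. Conversely every hyperplane section of corank one is maximal, since a closed
  subsystem containing it with the same rank has the same span. Moving n into the closed dominant
  chamber by the (finite) Weyl group turns \<Phi> \<inter> n\<^sup>\<bottom> into the subsystem generated by the simple roots
  orthogonal to n, and corank one means exactly one simple root is omitted.

  The argument works for every root system with a base of rank r \<ge> 1; the classical-type
  hypothesis is used only to know that r \<ge> 1.
*)

lemma linear_rrefl: "linear (rrefl a)"
  unfolding rrefl_def
  by (intro linearI) (auto simp: algebra_simps inner_add_left add_divide_distrib)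

lemma inner_rrefl_rrefl: "a \<noteq> 0 \<Longrightarrow> rrefl a u \<bullet> rrefl a v = u \<bullet> v"
  unfolding rrefl_def by (simp add: algebra_simps inner_commute power2_eq_square)

lemma rrefl_rrefl: "a \<noteq> 0 \<Longrightarrow> rrefl a (rrefl a v) = v"
  unfolding rrefl_def by (simp add: algebra_simps inner_commute)

lemma rrefl_fixes_orthogonal: "v \<bullet> a = 0 \<Longrightarrow> rrefl a v = v"
  unfolding rrefl_def by simp

lemma root_system_nonzero: "root_system \<Phi> \<Longrightarrow> a \<in> \<Phi> \<Longrightarrow> a \<noteq> 0"
  unfolding root_system_def by auto

lemma root_system_finite: "root_system \<Phi> \<Longrightarrow> finite \<Phi>"
  unfolding root_system_def by auto

lemma root_system_rrefl: "root_system \<Phi> \<Longrightarrow> a \<in> \<Phi> \<Longrightarrow> b \<in> \<Phi> \<Longrightarrow> rrefl a b \<in> \<Phi>"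
  unfolding root_system_def by blast

lemma root_system_subset:
  assumes "root_system \<Phi>" "\<Psi> \<subseteq> \<Phi>" "\<forall>a\<in>\<Psi>. \<forall>b\<in>\<Psi>. rrefl a b \<in> \<Psi>"
  shows "root_system \<Psi>"
proof -
  have "finite \<Phi>" "0 \<notin> \<Phi>" "\<forall>a\<in>\<Phi>. \<forall>b\<in>\<Phi>. cartan_int b a \<in> \<int>"
    "\<forall>a\<in>\<Phi>. \<forall>c::real. c *\<^sub>R a \<in> \<Phi> \<longrightarrow> c = 1 \<or> c = -1"
    using assms(1) unfolding root_system_def by simp_all
  then show ?thesis
    unfolding root_system_def using assms(2,3) finite_subset[OF assms(2)] by blast
qed

lemma weyl_group_linear: "w \<in> weyl_group \<Phi> \<Longrightarrow> linear w"
  by (induction rule: weyl_group.induct) (use linear_id linear_compose linear_rrefl in blast)+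

lemma weyl_group_inner:
  assumes "root_system \<Phi>" "w \<in> weyl_group \<Phi>"
  shows "w u \<bullet> w v = u \<bullet> v"
  using assms(2) by induction (auto simp: inner_rrefl_rrefl root_system_nonzero[OF assms(1)])

lemma weyl_group_inj:
  assumes "root_system \<Phi>" "w \<in> weyl_group \<Phi>"
  shows "inj w"
proof (rule injI)
  fix x y assume "w x = w y"
  then have "w (x - y) = 0"
    using weyl_group_linear[OF assms(2)] by (simp add: linear_diff)
  then have "(x - y) \<bullet> (x - y) = 0"
    using weyl_group_inner[OF assms, of "x - y" "x - y"] by simp
  then show "x = y" by simp
qed

lemma weyl_group_image_roots:
  assumes "root_system \<Phi>" "w \<in> weyl_group \<Phi>"
  shows "w ` \<Phi> = \<Phi>"
proof -
  have "w ` \<Phi> \<subseteq> \<Phi>"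
    using assms(2) by induction (auto simp: root_system_rrefl[OF assms(1)])
  moreover have "card (w ` \<Phi>) = card \<Phi>"
    using weyl_group_inj[OF assms] by (simp add: card_image inj_on_subset)
  ultimately show ?thesis
    using root_system_finite[OF assms(1)] by (simp add: card_subset_eq)
qed

lemma weyl_group_comp:
  "v \<in> weyl_group \<Phi> \<Longrightarrow> w \<in> weyl_group \<Phi> \<Longrightarrow> v \<circ> w \<in> weyl_group \<Phi>"
  by (induction rule: weyl_group.induct) (auto simp: comp_assoc intro: weyl_group.intros)

lemma weyl_group_inverse:
  assumes "root_system \<Phi>" "w \<in> weyl_group \<Phi>"
  obtains v where "v \<in> weyl_group \<Phi>" "v \<circ> w = id"
  using assms(2)
proof (induction arbitrary: thesis)
  case weyl_id
  show ?case by (rule weyl_id.prems[OF weyl_group.weyl_id]) simp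
next
  case (weyl_step w a)
  obtain v where v: "v \<in> weyl_group \<Phi>" "v \<circ> w = id" using weyl_step.IH by blast
  have "(v \<circ> rrefl a) \<circ> (rrefl a \<circ> w) = id"
    using v(2) rrefl_rrefl[OF root_system_nonzero[OF assms(1) weyl_step.hyps(2)]]
    by (auto simp: fun_eq_iff)
  moreover have "v \<circ> rrefl a \<in> weyl_group \<Phi>"
    using weyl_group_comp[OF v(1)] weyl_group.weyl_step[OF weyl_group.weyl_id weyl_step.hyps(2)]
    by simp
  ultimately show ?case using weyl_step.prems by blast
qed

lemma weyl_group_fixes_orthogonal:
  "w \<in> weyl_group \<Phi> \<Longrightarrow> (\<forall>a\<in>\<Phi>. x \<bullet> a = 0) \<Longrightarrow> w x = x"
  by (induction rule: weyl_group.induct) (auto simp: rrefl_fixes_orthogonal)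

lemma finite_weyl_group:
  assumes "root_system \<Phi>"
  shows "finite (weyl_group \<Phi>)"
proof -
  have "inj_on (\<lambda>w. restrict w \<Phi>) (weyl_group \<Phi>)"
  proof (rule inj_onI)
    fix v w assume v: "v \<in> weyl_group \<Phi>" and w: "w \<in> weyl_group \<Phi>"
      and eq: "restrict v \<Phi> = restrict w \<Phi>"
    show "v = w"
    proof
      fix x
      obtain p q where p: "p \<in> span \<Phi>" and q: "\<And>u. u \<in> span \<Phi> \<Longrightarrow> orthogonal q u"
        and x: "x = p + q"
        using orthogonal_subspace_decomp_exists by blast
      \<comment> \<open>\<open>v\<close> and \<open>w\<close> agree on \<open>span \<Phi>\<close> by linearity and both fix its orthogonal complement\<close>
      have "v u = w u" if "u \<in> \<Phi>" for u
        using fun_cong[OF eq, of u] that by simp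
      then have "v p = w p"
        using linear_eq_on_span[OF weyl_group_linear[OF v] weyl_group_linear[OF w]] p by blast
      moreover have "\<forall>a\<in>\<Phi>. q \<bullet> a = 0"
        using q by (auto simp: orthogonal_def intro: span_base)
      ultimately show "v x = w x"
        using weyl_group_fixes_orthogonal[OF v] weyl_group_fixes_orthogonal[OF w]
          weyl_group_linear[OF v] weyl_group_linear[OF w] x by (simp add: linear_add)
    qed
  qed
  moreover have "(\<lambda>w. restrict w \<Phi>) ` weyl_group \<Phi> \<subseteq> \<Phi> \<rightarrow>\<^sub>E \<Phi>"
    using weyl_group_image_roots[OF assms] by (fastforce simp: restrict_PiE_iff)
  moreover have "finite (\<Phi> \<rightarrow>\<^sub>E \<Phi>)"
    using root_system_finite[OF assms] by (simp add: finite_PiE)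
  ultimately show ?thesis
    by (meson finite_imageD finite_subset)
qed

lemma weyl_group_image_hyperplane:
  assumes "root_system \<Phi>" "w \<in> weyl_group \<Phi>"
  shows "w ` (\<Phi> \<inter> {v. v \<bullet> n = 0}) = \<Phi> \<inter> {v. v \<bullet> w n = 0}"
proof -
  have "w ` (\<Phi> \<inter> {v. v \<bullet> n = 0}) = w ` \<Phi> \<inter> w ` {v. w v \<bullet> w n = 0}"
    using weyl_group_inner[OF assms] image_Int[OF weyl_group_inj[OF assms]] by simp
  also have "\<dots> = \<Phi> \<inter> {v. v \<bullet> w n = 0}"
    using weyl_group_image_roots[OF assms] by auto
  finally show ?thesis .
qed

lemma rank_weyl_group_image:
  assumes "root_system \<Phi>" "w \<in> weyl_group \<Phi>"
  shows "rank (w ` S) = rank S"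
  unfolding rank_def dim_span
  using dim_image_eq[OF weyl_group_linear[OF assms(2)]] weyl_group_inj[OF assms]
  by (simp add: inj_on_subset)

lemma inner_span_eq_zero: "(\<forall>u\<in>S. u \<bullet> x = 0) \<Longrightarrow> a \<in> span S \<Longrightarrow> a \<bullet> x = 0"
  using orthogonal_to_span[of a S x] by (simp add: orthogonal_def inner_commute)

lemma independent_dual_vector:
  fixes B :: "'a::euclidean_space set"
  assumes "independent B" "b \<in> B"
  obtains x where "x \<bullet> b > 0" "\<forall>c\<in>B - {b}. x \<bullet> c = 0"
proof -
  obtain p x where p: "p \<in> span (B - {b})"
    and x: "\<And>u. u \<in> span (B - {b}) \<Longrightarrow> orthogonal x u" and b: "b = p + x"
    using orthogonal_subspace_decomp_exists by blast
  have "b \<notin> span (B - {b})"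
    using assms dependent_def by blast
  then have "x \<noteq> 0" using p b by auto
  moreover have "x \<bullet> b = x \<bullet> x"
    using x[OF p] b by (simp add: orthogonal_def inner_add_right)
  ultimately have "x \<bullet> b > 0" by simp
  moreover have "\<forall>c\<in>B - {b}. x \<bullet> c = 0"
    using x[OF span_base] by (simp add: orthogonal_def)
  ultimately show ?thesis using that by blast
qed

lemma independent_regular_vector:
  fixes B :: "'a::euclidean_space set"
  assumes "independent B"
  obtains \<rho> where "\<forall>b\<in>B. \<rho> \<bullet> b > 0"
proof -
  have "\<forall>b\<in>B. \<exists>x. x \<bullet> b > 0 \<and> (\<forall>c\<in>B - {b}. x \<bullet> c = 0)"
    using independent_dual_vector[OF assms] by metis
  then obtain X where X: "\<forall>b\<in>B. X b \<bullet> b > 0 \<and> (\<forall>c\<in>B - {b}. X b \<bullet> c = 0)"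
    by (rule bchoice[THEN exE])
  have "(\<Sum>b\<in>B. X b) \<bullet> c > 0" if c: "c \<in> B" for c
  proof -
    have "(\<Sum>b\<in>B. X b) \<bullet> c = X c \<bullet> c + (\<Sum>b\<in>B - {c}. X b \<bullet> c)"
      using sum.remove[OF independent_imp_finite[OF assms] c] by (simp add: inner_sum_left)
    also have "(\<Sum>b\<in>B - {c}. X b \<bullet> c) = 0"
      using X c by (intro sum.neutral) auto
    finally show ?thesis using X c by simp
  qed
  then show ?thesis using that by blast
qed

lemma closed_subsystem_hyperplane:
  assumes "root_system \<Phi>"
  shows "closed_subsystem \<Phi> (\<Phi> \<inter> {v. v \<bullet> m = 0})"
proof -
  have "rrefl a b \<bullet> m = 0" if "a \<bullet> m = 0" "b \<bullet> m = 0" for a b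
    using that unfolding rrefl_def by (simp add: inner_diff_left)
  then have "root_system (\<Phi> \<inter> {v. v \<bullet> m = 0})"
    using root_system_rrefl[OF assms] by (intro root_system_subset[OF assms]) auto
  then show ?thesis
    unfolding closed_subsystem_def root_subsystem_def by (simp add: inner_add_left)
qed

lemma good_subsystem_hyperplane:
  assumes "root_system \<Phi>" "rank (\<Phi> \<inter> {v. v \<bullet> x = 0}) = rank \<Phi> - 1"
  shows "good_subsystem \<Phi> (\<Phi> \<inter> {v. v \<bullet> x = 0})"
  unfolding good_subsystem_def
proof (intro conjI allI impI closed_subsystem_hyperplane assms)
  let ?H = "\<Phi> \<inter> {v. v \<bullet> x = 0}"
  fix \<Psi> assume \<Psi>: "closed_subsystem \<Phi> \<Psi> \<and> rank \<Psi> = rank \<Phi> - 1 \<and> ?H \<subseteq> \<Psi>"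
  then have "span ?H = span \<Psi>"
    using assms(2) unfolding rank_def by (intro dim_eq_span) auto
  then have "\<forall>v\<in>\<Psi>. v \<bullet> x = 0"
    using inner_span_eq_zero[of ?H x] span_base by blast
  moreover have "\<Psi> \<subseteq> \<Phi>"
    using \<Psi> unfolding closed_subsystem_def root_subsystem_def by blast
  ultimately show "\<Psi> = ?H" using \<Psi> by blast
qed

lemma good_subsystem_is_hyperplane:
  assumes "root_system \<Phi>" "rank \<Phi> > 0" "good_subsystem \<Phi> \<Psi>"
  obtains n where "\<Psi> = \<Phi> \<inter> {v. v \<bullet> n = 0}"
proof -
  have \<Psi>: "\<Psi> \<subseteq> \<Phi>" "rank \<Psi> = rank \<Phi> - 1"
    and max: "\<And>\<Psi>'. closed_subsystem \<Phi> \<Psi>' \<Longrightarrow> rank \<Psi>' = rank \<Phi> - 1 \<Longrightarrow> \<Psi> \<subseteq> \<Psi>' \<Longrightarrow> \<Psi>' = \<Psi>"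
    using assms(3) unfolding good_subsystem_def closed_subsystem_def root_subsystem_def by auto
  obtain a where a: "a \<in> \<Phi>" "a \<notin> span \<Psi>"
  proof (rule ccontr)
    assume "\<not> thesis"
    then have "\<Phi> \<subseteq> span \<Psi>" using that by blast
    then have "rank \<Phi> \<le> rank \<Psi>" unfolding rank_def by (simp add: dim_mono)
    then show False using \<Psi>(2) assms(2) by simp
  qed
  obtain p n where p: "p \<in> span \<Psi>" and n: "\<And>u. u \<in> span \<Psi> \<Longrightarrow> orthogonal n u"
    and a_eq: "a = p + n"
    using orthogonal_subspace_decomp_exists by blast
  let ?H = "\<Phi> \<inter> {v. v \<bullet> n = 0}"
  have "\<Psi> \<subseteq> ?H"
    using \<Psi>(1) n[OF span_base] by (auto simp: orthogonal_def inner_commute)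
  then have "rank \<Psi> \<le> rank ?H"
    unfolding rank_def by (simp add: dim_subset)
  moreover have "rank ?H < rank \<Phi>"
    unfolding rank_def dim_span
  proof (rule dim_psubset)
    have "n = a - p" using a_eq by simp
    then have "n \<in> span \<Phi>"
      using a(1) p span_mono[OF \<Psi>(1)] by (auto intro: span_base span_diff)
    moreover have "n \<notin> span ?H"
      using inner_span_eq_zero[of ?H n n] a p a_eq by auto
    moreover have "span ?H \<subseteq> span \<Phi>"
      by (simp add: span_mono)
    ultimately show "span ?H \<subset> span \<Phi>" by blast
  qed
  ultimately have "rank ?H = rank \<Phi> - 1"
    using \<Psi>(2) by linarith
  then show ?thesis
    using max[OF closed_subsystem_hyperplane[OF assms(1)]] \<open>\<Psi> \<subseteq> ?H\<close> that by blast
qed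

lemma is_base_root: "is_base \<Phi> r \<alpha> \<Longrightarrow> k \<in> {1..r} \<Longrightarrow> \<alpha> k \<in> \<Phi>"
  unfolding is_base_def by blast

lemma is_base_inj_on: "is_base \<Phi> r \<alpha> \<Longrightarrow> inj_on \<alpha> {1..r}"
  unfolding is_base_def by blast

lemma is_base_independent: "is_base \<Phi> r \<alpha> \<Longrightarrow> independent (\<alpha> ` {1..r})"
  unfolding is_base_def by blast

lemma is_base_expansion:
  assumes "is_base \<Phi> r \<alpha>" "v \<in> \<Phi>"
  obtains c :: "nat \<Rightarrow> int" where "v = (\<Sum>i=1..r. real_of_int (c i) *\<^sub>R \<alpha> i)"
    "(\<forall>i\<in>{1..r}. c i \<ge> 0) \<or> (\<forall>i\<in>{1..r}. c i \<le> 0)"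
  using assms unfolding is_base_def by blast

lemma dim_is_base_image:
  assumes "is_base \<Phi> r \<alpha>" "J \<subseteq> {1..r}"
  shows "dim (\<alpha> ` J) = card J"
proof -
  have "independent (\<alpha> ` J)"
    using independent_mono[OF is_base_independent[OF assms(1)]] assms(2) by blast
  then have "dim (\<alpha> ` J) = card (\<alpha> ` J)" by (rule dim_eq_card_independent)
  also have "\<dots> = card J"
    using card_image[OF inj_on_subset[OF is_base_inj_on[OF assms(1)] assms(2)]] .
  finally show ?thesis .
qed

lemma span_eq_span_is_base:
  assumes "is_base \<Phi> r \<alpha>"
  shows "span \<Phi> = span (\<alpha> ` {1..r})"
proof -
  have "\<Phi> \<subseteq> span (\<alpha> ` {1..r})"
  proof
    fix v assume "v \<in> \<Phi>"
    then obtain c where "v = (\<Sum>i=1..r. real_of_int (c i) *\<^sub>R \<alpha> i)"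
      using is_base_expansion[OF assms] by blast
    moreover have "(\<Sum>i=1..r. real_of_int (c i) *\<^sub>R \<alpha> i) \<in> span (\<alpha> ` {1..r})"
      by (rule span_sum, rule span_scale, rule span_base) simp
    ultimately show "v \<in> span (\<alpha> ` {1..r})" by simp
  qed
  moreover have "\<alpha> ` {1..r} \<subseteq> span \<Phi>"
    using is_base_root[OF assms] by (auto intro: span_base)
  ultimately show ?thesis by (simp add: span_eq)
qed

lemma rank_is_base: "is_base \<Phi> r \<alpha> \<Longrightarrow> rank \<Phi> = r"
  unfolding rank_def using span_eq_span_is_base dim_is_base_image[of \<Phi> r \<alpha> "{1..r}"]
  by (metis card_atLeastAtMost diff_Suc_1 dim_span order_refl)

lemma int_span_subset_span: "int_span S \<subseteq> span S"
  unfolding int_span_def by (blast intro: span_sum span_scale span_base)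

lemma subset_int_span: "S \<subseteq> int_span S"
proof
  fix x assume "x \<in> S"
  then show "x \<in> int_span S"
    unfolding int_span_def by (intro CollectI exI[of _ "{x}"] exI[of _ "\<lambda>_. 1"]) simp
qed

lemma sum_mem_int_span_image:
  assumes "finite J" "inj_on \<alpha> J"
  shows "(\<Sum>i\<in>J. real_of_int (c i) *\<^sub>R \<alpha> i) \<in> int_span (\<alpha> ` J)"
proof -
  have eq: "(\<Sum>i\<in>J. real_of_int (c i) *\<^sub>R \<alpha> i)
      = (\<Sum>u\<in>\<alpha> ` J. real_of_int (c (inv_into J \<alpha> u)) *\<^sub>R u)"
    by (simp add: sum.reindex[OF assms(2)] inv_into_f_f[OF assms(2)])
  show ?thesis
    unfolding int_span_def
    by (intro CollectI exI[of _ "\<alpha> ` J"] exI[of _ "\<lambda>u. c (inv_into J \<alpha> u)"]) (simp add: eq assms(1))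
qed

lemma rank_parabolic_subsystem:
  assumes "is_base \<Phi> r \<alpha>" "J \<subseteq> {1..r}"
  shows "rank (\<Phi> \<inter> int_span (\<alpha> ` J)) = card J"
proof -
  have "\<alpha> ` J \<subseteq> \<Phi> \<inter> int_span (\<alpha> ` J)"
    using assms is_base_root subset_int_span by blast
  then have "span (\<Phi> \<inter> int_span (\<alpha> ` J)) = span (\<alpha> ` J)"
    using int_span_subset_span span_superset by (force simp: span_eq)
  then show ?thesis
    unfolding rank_def using dim_is_base_image[OF assms] by (metis dim_span)
qed

lemma sum_same_sign_eq_0_imp:
  fixes f :: "'b \<Rightarrow> real"
  assumes "finite A" "(\<forall>i\<in>A. f i \<ge> 0) \<or> (\<forall>i\<in>A. f i \<le> 0)" "sum f A = 0" "i \<in> A"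
  shows "f i = 0"
  using assms(2)
proof
  assume "\<forall>i\<in>A. f i \<ge> 0"
  then show ?thesis
    using sum_nonneg_eq_0_iff[OF assms(1), of f] assms(3,4) by simp
next
  assume "\<forall>i\<in>A. f i \<le> 0"
  then show ?thesis
    using sum_nonneg_eq_0_iff[OF assms(1), of "\<lambda>i. - f i"] assms(3,4) by (simp add: sum_negf)
qed

lemma dominant_hyperplane_eq_parabolic:
  assumes base: "is_base \<Phi> r \<alpha>" and dominant: "\<forall>k\<in>{1..r}. y \<bullet> \<alpha> k \<ge> 0"
  defines "J \<equiv> {k\<in>{1..r}. y \<bullet> \<alpha> k = 0}"
  shows "\<Phi> \<inter> {v. v \<bullet> y = 0} = \<Phi> \<inter> int_span (\<alpha> ` J)"
proof
  have "\<forall>u\<in>\<alpha> ` J. u \<bullet> y = 0"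
    unfolding J_def by (auto simp: inner_commute)
  then show "\<Phi> \<inter> int_span (\<alpha> ` J) \<subseteq> \<Phi> \<inter> {v. v \<bullet> y = 0}"
    using inner_span_eq_zero int_span_subset_span by blast
next
  show "\<Phi> \<inter> {v. v \<bullet> y = 0} \<subseteq> \<Phi> \<inter> int_span (\<alpha> ` J)"
  proof
    fix v assume v: "v \<in> \<Phi> \<inter> {v. v \<bullet> y = 0}"
    then obtain c where c: "v = (\<Sum>i=1..r. real_of_int (c i) *\<^sub>R \<alpha> i)"
      and sign: "(\<forall>i\<in>{1..r}. c i \<ge> 0) \<or> (\<forall>i\<in>{1..r}. c i \<le> 0)"
      using is_base_expansion[OF base] by blast
    have sum: "(\<Sum>i=1..r. real_of_int (c i) * (y \<bullet> \<alpha> i)) = v \<bullet> y"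
      unfolding c inner_sum_left by (simp add: inner_commute)
    have sign': "(\<forall>i\<in>{1..r}. real_of_int (c i) * (y \<bullet> \<alpha> i) \<ge> 0)
        \<or> (\<forall>i\<in>{1..r}. real_of_int (c i) * (y \<bullet> \<alpha> i) \<le> 0)"
      using sign
    proof
      assume "\<forall>i\<in>{1..r}. c i \<ge> 0"
      then show ?thesis using dominant by simp
    next
      assume "\<forall>i\<in>{1..r}. c i \<le> 0"
      then show ?thesis using dominant by (simp add: mult_nonpos_nonneg)
    qed
    have "real_of_int (c i) * (y \<bullet> \<alpha> i) = 0" if "i \<in> {1..r}" for i
      by (rule sum_same_sign_eq_0_imp[OF _ sign']) (use sum v that in auto)
    then have "c i = 0" if "i \<in> {1..r} - J" for i
      using that unfolding J_def by auto
    then have "v = (\<Sum>i\<in>J. real_of_int (c i) *\<^sub>R \<alpha> i)"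
      unfolding c by (intro sum.mono_neutral_right) (auto simp: J_def)
    moreover have "inj_on \<alpha> J"
      by (rule inj_on_subset[OF is_base_inj_on[OF base]]) (auto simp: J_def)
    ultimately show "v \<in> \<Phi> \<inter> int_span (\<alpha> ` J)"
      using v sum_mem_int_span_image[of J] unfolding J_def by auto
  qed
qed

lemma inner_rrefl_gt:
  assumes "y \<bullet> a < 0" "a \<bullet> \<rho> > 0"
  shows "rrefl a y \<bullet> \<rho> > y \<bullet> \<rho>"
proof -
  have "a \<noteq> 0" using assms(2) by auto
  then have "2 * (y \<bullet> a) / (a \<bullet> a) < 0"
    using assms(1) by (simp add: divide_neg_pos)
  then have "2 * (y \<bullet> a) / (a \<bullet> a) * (a \<bullet> \<rho>) < 0"
    using assms(2) by (rule mult_neg_pos)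
  then show ?thesis
    unfolding rrefl_def by (simp add: inner_diff_left)
qed

lemma exists_dominant_conjugate:
  assumes rs: "root_system \<Phi>" and base: "is_base \<Phi> r \<alpha>"
  obtains w where "w \<in> weyl_group \<Phi>" "\<forall>k\<in>{1..r}. w n \<bullet> \<alpha> k \<ge> 0"
proof -
  obtain \<rho> where \<rho>: "\<forall>k\<in>{1..r}. \<alpha> k \<bullet> \<rho> > 0"
    using independent_regular_vector[OF is_base_independent[OF base]] by (auto simp: inner_commute)
  obtain w where w: "w \<in> weyl_group \<Phi>"
    and max: "\<And>v. v \<in> weyl_group \<Phi> \<Longrightarrow> v n \<bullet> \<rho> \<le> w n \<bullet> \<rho>"
    using ex_is_arg_min_if_finite[OF finite_weyl_group[OF rs], of "\<lambda>w. - (w n \<bullet> \<rho>)"]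
      weyl_group.weyl_id unfolding is_arg_min_linorder by fastforce
  \<comment> \<open>a simple reflection would increase \<open>w n \<bullet> \<rho>\<close> beyond its maximum over the orbit\<close>
  have "w n \<bullet> \<alpha> k \<ge> 0" if k: "k \<in> {1..r}" for k
  proof (rule ccontr)
    assume "\<not> w n \<bullet> \<alpha> k \<ge> 0"
    then have "rrefl (\<alpha> k) (w n) \<bullet> \<rho> > w n \<bullet> \<rho>"
      using \<rho> k by (intro inner_rrefl_gt) auto
    moreover have "rrefl (\<alpha> k) \<circ> w \<in> weyl_group \<Phi>"
      using w is_base_root[OF base k] by (rule weyl_group.weyl_step)
    ultimately show False using max by fastforce
  qed
  then show ?thesis using w that by blast
qed

lemma hyperplane_conjugate_maximal_parabolic:
  assumes rs: "root_system \<Phi>" and base: "is_base \<Phi> r \<alpha>" and "r \<ge> 1"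
    and rank: "rank (\<Phi> \<inter> {v. v \<bullet> n = 0}) = r - 1"
  obtains i w where "i \<in> {1..r}" "w \<in> weyl_group \<Phi>"
    "\<Phi> \<inter> {v. v \<bullet> n = 0} = w ` (\<Phi> \<inter> int_span (\<alpha> ` ({1..r} - {i})))"
proof -
  obtain u where u: "u \<in> weyl_group \<Phi>" and dom: "\<forall>k\<in>{1..r}. u n \<bullet> \<alpha> k \<ge> 0"
    using exists_dominant_conjugate[OF rs base] by blast
  define J where "J = {k\<in>{1..r}. u n \<bullet> \<alpha> k = 0}"
  have uH: "u ` (\<Phi> \<inter> {v. v \<bullet> n = 0}) = \<Phi> \<inter> int_span (\<alpha> ` J)"
    unfolding weyl_group_image_hyperplane[OF rs u] J_def
    by (rule dominant_hyperplane_eq_parabolic[OF base dom])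
  have "J \<subseteq> {1..r}"
    unfolding J_def by blast
  then have "card J = rank (\<Phi> \<inter> int_span (\<alpha> ` J))"
    using rank_parabolic_subsystem[OF base] by simp
  also have "\<dots> = r - 1"
    using rank_weyl_group_image[OF rs u] rank uH by metis
  finally have "card J = r - 1" .
  then have "J \<noteq> {1..r}"
    using \<open>r \<ge> 1\<close> by auto
  then obtain i where i: "i \<in> {1..r}" "i \<notin> J"
    unfolding J_def by blast
  have "J = {1..r} - {i}"
    using i \<open>card J = r - 1\<close> \<open>J \<subseteq> {1..r}\<close> by (intro card_subset_eq) auto
  obtain v where v: "v \<in> weyl_group \<Phi>" "v \<circ> u = id"
    using weyl_group_inverse[OF rs u] by blast
  then have "\<Phi> \<inter> {v. v \<bullet> n = 0} = v ` (u ` (\<Phi> \<inter> {v. v \<bullet> n = 0}))"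
    by (simp add: image_comp)
  also have "\<dots> = v ` (\<Phi> \<inter> int_span (\<alpha> ` ({1..r} - {i})))"
    using uH \<open>J = {1..r} - {i}\<close> by simp
  finally show ?thesis
    by (rule that[OF i(1) v(1)])
qed

lemma maximal_parabolic_eq_hyperplane:
  assumes base: "is_base \<Phi> r \<alpha>" and i: "i \<in> {1..r}"
  obtains x where "\<Phi> \<inter> int_span (\<alpha> ` ({1..r} - {i})) = \<Phi> \<inter> {v. v \<bullet> x = 0}"
proof -
  obtain x where x: "x \<bullet> \<alpha> i > 0" "\<forall>c\<in>\<alpha> ` {1..r} - {\<alpha> i}. x \<bullet> c = 0"
    using independent_dual_vector[OF is_base_independent[OF base]] i by blast
  have zero: "x \<bullet> \<alpha> k = 0" if "k \<in> {1..r} - {i}" for k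
    using x(2) that i inj_onD[OF is_base_inj_on[OF base], of k i] by auto
  then have dominant: "\<forall>k\<in>{1..r}. x \<bullet> \<alpha> k \<ge> 0"
    using x(1) by (metis DiffI less_eq_real_def singletonD)
  moreover have "{k\<in>{1..r}. x \<bullet> \<alpha> k = 0} = {1..r} - {i}"
    using x(1) zero by force
  ultimately have "\<Phi> \<inter> int_span (\<alpha> ` ({1..r} - {i})) = \<Phi> \<inter> {v. v \<bullet> x = 0}"
    using dominant_hyperplane_eq_parabolic[OF base dominant] by simp
  then show ?thesis by (rule that)
qed

theorem theoremA:
  fixes \<Phi> :: "'a::euclidean_space set" and \<alpha> :: "nat \<Rightarrow> 'a" and r :: nat
  assumes "root_system \<Phi>"
    and "is_base \<Phi> r \<alpha>"
    and "classical_type r \<alpha>"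
  shows "(\<forall>i\<in>{1..r}. good_subsystem \<Phi> (\<Phi> \<inter> int_span (\<alpha> ` ({1..r} - {i}))))
       \<and> (\<forall>\<Psi>. good_subsystem \<Phi> \<Psi> \<longrightarrow>
            (\<exists>i\<in>{1..r}. \<exists>w\<in>weyl_group \<Phi>. \<Psi> = w ` (\<Phi> \<inter> int_span (\<alpha> ` ({1..r} - {i})))))"
proof -
  have "r \<ge> 1"
    using assms(3) unfolding classical_type_def by auto
  have rank: "rank \<Phi> = r"
    using assms(2) by (rule rank_is_base)
  have "good_subsystem \<Phi> (\<Phi> \<inter> int_span (\<alpha> ` ({1..r} - {i})))" if i: "i \<in> {1..r}" for i
  proof -
    obtain x where "\<Phi> \<inter> int_span (\<alpha> ` ({1..r} - {i})) = \<Phi> \<inter> {v. v \<bullet> x = 0}"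
      using maximal_parabolic_eq_hyperplane[OF assms(2) i] .
    moreover have "rank (\<Phi> \<inter> int_span (\<alpha> ` ({1..r} - {i}))) = rank \<Phi> - 1"
      using rank_parabolic_subsystem[OF assms(2), of "{1..r} - {i}"] i rank by simp
    ultimately show ?thesis
      using good_subsystem_hyperplane[OF assms(1)] by simp
  qed
  moreover have "\<exists>i\<in>{1..r}. \<exists>w\<in>weyl_group \<Phi>. \<Psi> = w ` (\<Phi> \<inter> int_span (\<alpha> ` ({1..r} - {i})))"
    if good: "good_subsystem \<Phi> \<Psi>" for \<Psi>
  proof -
    obtain n where "\<Psi> = \<Phi> \<inter> {v. v \<bullet> n = 0}"
      using good_subsystem_is_hyperplane[OF assms(1) _ good] rank \<open>r \<ge> 1\<close> by auto
    moreover have "rank \<Psi> = r - 1"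
      using good rank unfolding good_subsystem_def by simp
    ultimately show ?thesis
      using hyperplane_conjugate_maximal_parabolic[OF assms(1,2) \<open>r \<ge> 1\<close>] by metis
  qed
  ultimately show ?thesis by blast
qed

end
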